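(* Let $m>1$ and let $\mathcal{H}=\sum_{j=1}^r\lambda_j[u_j^1,\ldots,u_j^m]_{\otimes h}$ with $0\neq\lambda_j\in\mathbb{R}$ and $u_j^i\in\mathbb{C}^{n_i}$. For each $i=1,\ldots,m$ let $U_i=\{u_1^i,\ldots,u_r^i\}$. If $k_{U_1}+\cdots+k_{U_m}\ge r+m$, then $\operatorname{hrank}(\mathcal{H})=r$ and the Hermitian rank decomposition of $\mathcal{H}$ is essentially unique, i.e. unique up to permutation of the terms and scaling of the decomposing vectors.
   Context: For $v_i\in\mathbb{C}^{n_i}$, $[v_1,\ldots,v_m]_{\otimes h}:=v_1\otimes\cdots\otimes v_m\otimes\overline{v_1}\otimes\cdots\otimes\overline{v_m}$. For a Hermitian tensor $\mathcal{H}$ (i.e. $\mathcal{H}\in\mathbb{C}^{n_1\times\cdots\times n_m\times n_1\times\cdots\times n_m}$ with $\mathcal{H}_{i_1\ldots i_m j_1\ldots j_m}=\overline{\mathcal{H}_{j_1\ldots j_m i_1\ldots i_m}}$), $\operatorname{hrank}(\mathcal{H})$ is the smallest $r$ with $\mathcal{H}=\sum_{i=1}^r\lambda_i[u_i^1,\ldots,u_i^m]_{\otimes h}$, $\lambda_i\in\mathbb{R}$, $u_i^j\in\mathbb{C}^{n_j}$; such a decomposition of minimal length is a Hermitian rank decomposition. For a finite set (list) $S$ of vectors, its Kruskal rank $k_S$ is the largest $k$ such that every subset of $k$ vectors of $S$ is linearly independent. *)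

theory Defs
  imports Complex_Main "HOL-Combinatorics.Permutations"
begin

text \<open>There are m modes, numbered 0..m-1, with dimensions n 0, ..., n (m-1).
  A vector of C^d is represented by a function nat => complex; only its components x < d matter.
  A tensor in C^(n_1 x ... x n_m x n_1 x ... x n_m) is represented as a function taking two
  multi-indices (lists of length m); only valid multi-indices matter.
  A family of r decomposition vectors: u j i is the vector u_j^i (term j < r, mode i < m).\<close>

definition valid_idx :: "(nat \<Rightarrow> nat) \<Rightarrow> nat \<Rightarrow> nat list \<Rightarrow> bool" where
  "valid_idx n m is \<longleftrightarrow> length is = m \<and> (\<forall>k<m. is ! k < n k)"

definition tensor_eq :: "(nat \<Rightarrow> nat) \<Rightarrow> nat \<Rightarrow>
    (nat list \<Rightarrow> nat list \<Rightarrow> complex) \<Rightarrow> (nat list \<Rightarrow> nat list \<Rightarrow> complex) \<Rightarrow> bool" where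
  "tensor_eq n m A B \<longleftrightarrow> (\<forall>is js. valid_idx n m is \<and> valid_idx n m js \<longrightarrow> A is js = B is js)"

definition herm_outer :: "nat \<Rightarrow> (nat \<Rightarrow> nat \<Rightarrow> complex) \<Rightarrow> nat list \<Rightarrow> nat list \<Rightarrow> complex" where
  "herm_outer m v is js = (\<Prod>i<m. v i (is ! i) * cnj (v i (js ! i)))"

definition herm_sum :: "nat \<Rightarrow> nat \<Rightarrow> (nat \<Rightarrow> real) \<Rightarrow> (nat \<Rightarrow> nat \<Rightarrow> nat \<Rightarrow> complex)
    \<Rightarrow> nat list \<Rightarrow> nat list \<Rightarrow> complex" where
  "herm_sum m r lam u is js = (\<Sum>j<r. complex_of_real (lam j) * herm_outer m (u j) is js)"

definition hrank :: "(nat \<Rightarrow> nat) \<Rightarrow> nat \<Rightarrow> (nat list \<Rightarrow> nat list \<Rightarrow> complex) \<Rightarrow> nat" where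
  "hrank n m H = (LEAST r. \<exists>lam u. tensor_eq n m H (herm_sum m r lam u))"

text \<open>Linear independence in C^d of the vectors S j, j \<in> J (indexed, so repetitions count).\<close>
definition lin_indep_on :: "nat \<Rightarrow> (nat \<Rightarrow> nat \<Rightarrow> complex) \<Rightarrow> nat set \<Rightarrow> bool" where
  "lin_indep_on d S J \<longleftrightarrow>
     (\<forall>c :: nat \<Rightarrow> complex. (\<forall>x<d. (\<Sum>j\<in>J. c j * S j x) = 0) \<longrightarrow> (\<forall>j\<in>J. c j = 0))"

definition kruskal_rank :: "nat \<Rightarrow> nat \<Rightarrow> (nat \<Rightarrow> nat \<Rightarrow> complex) \<Rightarrow> nat" where
  "kruskal_rank d r S = (GREATEST k. k \<le> r \<and>
      (\<forall>J. J \<subseteq> {..<r} \<and> card J = k \<longrightarrow> lin_indep_on d S J))"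

end

theory Submission
  imports Defs
begin

text \<open>
  Let \<open>W\<^sub>j = u\<^sub>j\<^sup>1 \<otimes> \<dots> \<otimes> u\<^sub>j\<^sup>m\<close>, so that \<open>H = \<Sum>\<^sub>j \<lambda>\<^sub>j W\<^sub>j W\<^sub>j\<^sup>*\<close>.
  Contracting a matrix \<open>\<Sum>\<^sub>j c\<^sub>j a\<^sub>j b\<^sub>j\<^sup>T\<close> with a dual family of the \<open>b\<^sub>j\<close> bounds its rank from
  below in terms of the Kruskal ranks of the \<open>a\<^sub>j\<close> and the \<open>b\<^sub>j\<close> (Kruskal's lemma). By induction
  over the modes, the Khatri-Rao product of the factors of a set \<open>I\<close> of modes then has Kruskal rank
  at least \<open>\<Sum>\<^sub>i\<^sub>\<in>\<^sub>I k\<^sub>i - |I| + 1\<close>, so \<open>\<Sum>\<^sub>i k\<^sub>i \<ge> r + m\<close> makes the \<open>W\<^sub>j\<close> linearly independent.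
  Contracting \<open>H\<close> with the dual family of the \<open>W\<^sub>j\<close> puts every \<open>W\<^sub>j\<close> into the span of the tensors
  \<open>Z\<^sub>b\<close> of any other decomposition, which therefore has at least \<open>r\<close> terms; if it has exactly \<open>r\<close>,
  the \<open>Z\<^sub>b\<close> are independent and span the same space. Each \<open>Z\<^sub>b\<close> is then a rank-one tensor in the
  span of the \<open>W\<^sub>j\<close>; splitting off a mode of Kruskal rank at least 2 and applying Kruskal's lemma
  once more shows that it is a multiple of a single \<open>W\<^sub>j\<close>. This yields the permutation, and
  comparing coefficients of the independent forms \<open>W\<^sub>j W\<^sub>j\<^sup>*\<close> yields the scalings.
\<close>

section \<open>Linear independence of families of functions\<close>

definition lin_indep_over :: "'p set \<Rightarrow> ('j \<Rightarrow> 'p \<Rightarrow> complex) \<Rightarrow> 'j set \<Rightarrow> bool" where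
  "lin_indep_over P f J \<longleftrightarrow> (\<forall>c. (\<forall>p\<in>P. (\<Sum>j\<in>J. c j * f j p) = 0) \<longrightarrow> (\<forall>j\<in>J. c j = 0))"

lemma lin_indep_overD:
  "lin_indep_over P f J \<Longrightarrow> (\<And>p. p \<in> P \<Longrightarrow> (\<Sum>j\<in>J. c j * f j p) = 0) \<Longrightarrow> j \<in> J \<Longrightarrow> c j = 0"
  unfolding lin_indep_over_def by blast

lemma lin_indep_on_iff_lin_indep_over: "lin_indep_on d S J \<longleftrightarrow> lin_indep_over {..<d} S J"
  unfolding lin_indep_on_def lin_indep_over_def by auto

lemma lin_indep_over_subset:
  assumes "lin_indep_over P f J" "K \<subseteq> J" "finite J"
  shows "lin_indep_over P f K"
  unfolding lin_indep_over_def
proof (intro allI impI ballI)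
  fix c j assume zero: "\<forall>p\<in>P. (\<Sum>j\<in>K. c j * f j p) = 0" and "j \<in> K"
  define c' where "c' j = (if j \<in> K then c j else 0)" for j
  have "(\<Sum>j\<in>J. c' j * f j p) = (\<Sum>j\<in>K. c j * f j p)" for p
    using assms(2,3) by (intro sum.mono_neutral_cong_right) (auto simp: c'_def)
  then have "c' j = 0"
    using lin_indep_overD[OF assms(1), of c'] zero \<open>j \<in> K\<close> assms(2) by auto
  then show "c j = 0" using \<open>j \<in> K\<close> by (simp add: c'_def)
qed

lemma lin_indep_over_nonzero:
  assumes "lin_indep_over P f J" "j \<in> J" "finite J"
  obtains p where "p \<in> P" "f j p \<noteq> 0"
proof -
  have "lin_indep_over P f {j}" using lin_indep_over_subset assms by blast
  then have "\<not> (\<forall>p\<in>P. f j p = 0)"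
    using lin_indep_overD[of P f "{j}" "\<lambda>_. 1" j] by auto
  then show ?thesis using that by blast
qed

lemma lin_indep_over_eliminate:
  assumes indep: "lin_indep_over (insert x P) f C" and "finite C" "c0 \<in> C" "f c0 x \<noteq> 0"
  shows "lin_indep_over P (\<lambda>c p. f c p - f c x / f c0 x * f c0 p) (C - {c0})"
  unfolding lin_indep_over_def
proof (intro allI impI ballI)
  fix \<alpha> j assume zero: "\<forall>p\<in>P. (\<Sum>j\<in>C - {c0}. \<alpha> j * (f j p - f j x / f c0 x * f c0 p)) = 0"
    and j: "j \<in> C - {c0}"
  define \<beta> where "\<beta> c = (if c = c0 then - (\<Sum>j\<in>C - {c0}. \<alpha> j * (f j x / f c0 x)) else \<alpha> c)" for c
  have \<beta>_sum: "(\<Sum>j\<in>C. \<beta> j * f j p) = (\<Sum>j\<in>C - {c0}. \<alpha> j * (f j p - f j x / f c0 x * f c0 p))" for p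
  proof -
    have "(\<Sum>j\<in>C. \<beta> j * f j p) = \<beta> c0 * f c0 p + (\<Sum>j\<in>C - {c0}. \<beta> j * f j p)"
      using assms(2,3) by (simp add: sum.remove)
    also have "(\<Sum>j\<in>C - {c0}. \<beta> j * f j p) = (\<Sum>j\<in>C - {c0}. \<alpha> j * f j p)"
      by (intro sum.cong) (auto simp: \<beta>_def)
    finally have "(\<Sum>j\<in>C. \<beta> j * f j p) = \<beta> c0 * f c0 p + (\<Sum>j\<in>C - {c0}. \<alpha> j * f j p)" .
    moreover have "\<beta> c0 = - (\<Sum>j\<in>C - {c0}. \<alpha> j * (f j x / f c0 x))" by (simp add: \<beta>_def)
    moreover have "(\<Sum>j\<in>C - {c0}. \<alpha> j * (f j p - f j x / f c0 x * f c0 p))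
        = (\<Sum>j\<in>C - {c0}. \<alpha> j * f j p) - (\<Sum>j\<in>C - {c0}. \<alpha> j * (f j x / f c0 x)) * f c0 p"
      by (simp only: right_diff_distrib sum_subtractf sum_distrib_right mult.assoc)
    ultimately show ?thesis by simp
  qed
  have "(\<Sum>j\<in>C - {c0}. \<alpha> j * (f j x - f j x / f c0 x * f c0 x)) = 0"
    using assms(4) by simp
  then have "(\<Sum>j\<in>C. \<beta> j * f j p) = 0" if "p \<in> insert x P" for p
    using that zero unfolding \<beta>_sum by blast
  then have "\<beta> j = 0"
    using lin_indep_overD[OF indep, of \<beta> j] j by blast
  then show "\<alpha> j = 0" using j by (simp add: \<beta>_def)
qed

lemma lin_indep_over_card_le:
  assumes "lin_indep_over P f C" "finite P"
  shows "card C \<le> card P"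
  using assms(2,1)
proof (induction P arbitrary: f C rule: finite_induct)
  case empty
  then show ?case using lin_indep_overD[of "{}" f C "\<lambda>_. 1"] by (cases "C = {}") auto
next
  case (insert x P)
  show ?case
  proof (cases "finite C \<and> (\<exists>c0\<in>C. f c0 x \<noteq> 0)")
    case False
    then have "infinite C \<or> lin_indep_over P f C"
      using insert.prems unfolding lin_indep_over_def by auto
    then show ?thesis using insert.IH insert.hyps by (auto intro: le_SucI)
  next
    case True
    then obtain c0 where "c0 \<in> C" "f c0 x \<noteq> 0" "finite C" by blast
    then have "card (C - {c0}) \<le> card P"
      using insert.IH lin_indep_over_eliminate[OF insert.prems] by blast
    then show ?thesis using insert.hyps \<open>c0 \<in> C\<close> \<open>finite C\<close> by (simp add: card_Diff_singleton)
  qed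
qed

lemma lin_indep_over_card_le_span:
  assumes "lin_indep_over P W A" "finite B"
    and span: "\<forall>a\<in>A. \<forall>p\<in>P. W a p = (\<Sum>b\<in>B. s a b * Z b p)"
  shows "card A \<le> card B"
proof -
  have "lin_indep_over B s A"
    unfolding lin_indep_over_def
  proof (intro allI impI ballI)
    fix \<alpha> a assume zero: "\<forall>b\<in>B. (\<Sum>a\<in>A. \<alpha> a * s a b) = 0" and "a \<in> A"
    have "(\<Sum>a\<in>A. \<alpha> a * W a p) = (\<Sum>b\<in>B. (\<Sum>a\<in>A. \<alpha> a * s a b) * Z b p)" if "p \<in> P" for p
      using span that by (simp add: sum_distrib_left sum_distrib_right mult.assoc sum.swap[of _ A])
    then show "\<alpha> a = 0"
      using lin_indep_overD[OF assms(1), of \<alpha> a] zero \<open>a \<in> A\<close> by simp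
  qed
  then show ?thesis using lin_indep_over_card_le assms(2) by blast
qed

lemma lin_indep_over_if_spanning:
  assumes indep: "lin_indep_over P W A" "finite B" "card B \<le> card A"
    and span: "\<forall>a\<in>A. \<forall>p\<in>P. W a p = (\<Sum>b\<in>B. s a b * Z b p)"
  shows "lin_indep_over P Z B"
  unfolding lin_indep_over_def
proof (intro allI impI ballI, rule ccontr)
  fix \<beta> b0 assume zero: "\<forall>p\<in>P. (\<Sum>b\<in>B. \<beta> b * Z b p) = 0" and "b0 \<in> B" "\<beta> b0 \<noteq> 0"
  let ?B0 = "B - {b0}"
  have "W a p = (\<Sum>b\<in>?B0. (s a b - s a b0 / \<beta> b0 * \<beta> b) * Z b p)" if "a \<in> A" "p \<in> P" for a p
  proof -
    have "\<beta> b0 * Z b0 p + (\<Sum>b\<in>?B0. \<beta> b * Z b p) = 0"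
      using zero that(2) \<open>b0 \<in> B\<close> assms(2) by (simp add: sum.remove)
    then have "(\<Sum>b\<in>?B0. \<beta> b * Z b p) = - (\<beta> b0 * Z b0 p)"
      by (simp add: eq_neg_iff_add_eq_0 add.commute)
    moreover have "W a p = s a b0 * Z b0 p + (\<Sum>b\<in>?B0. s a b * Z b p)"
      using span that \<open>b0 \<in> B\<close> assms(2) by (simp add: sum.remove)
    moreover have "(\<Sum>b\<in>?B0. (s a b - s a b0 / \<beta> b0 * \<beta> b) * Z b p)
        = (\<Sum>b\<in>?B0. s a b * Z b p) - s a b0 / \<beta> b0 * (\<Sum>b\<in>?B0. \<beta> b * Z b p)"
      by (simp only: left_diff_distrib sum_subtractf sum_distrib_left mult.assoc)
    ultimately show ?thesis using \<open>\<beta> b0 \<noteq> 0\<close> by simp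
  qed
  then have "card A \<le> card ?B0"
    using lin_indep_over_card_le_span[OF indep(1), where s = "\<lambda>a b. s a b - s a b0 / \<beta> b0 * \<beta> b"] assms(2)
    by blast
  moreover have "card B > 0" using assms(2) \<open>b0 \<in> B\<close> card_gt_0_iff by blast
  ultimately show False using assms(2,3) \<open>b0 \<in> B\<close> by (simp add: card_Diff_singleton)
qed

lemma inj_on_of_multiples:
  fixes r :: nat
  assumes indep: "lin_indep_over P Z {..<r}"
    and multiple: "\<forall>b<r. \<pi> b < r \<and> d b \<noteq> 0 \<and> (\<forall>x\<in>P. Z b x = d b * W (\<pi> b) x)"
  shows "inj_on \<pi> {..<r}"
proof (rule inj_onI, rule ccontr)
  fix b1 b2 assume "b1 \<in> {..<r}" "b2 \<in> {..<r}" "\<pi> b1 = \<pi> b2" "b1 \<noteq> b2"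
  define c where "c b = (if b = b1 then d b2 else if b = b2 then - d b1 else 0)" for b
  have "(\<Sum>b<r. c b * Z b x) = (\<Sum>b\<in>{b1, b2}. c b * Z b x)" for x
    using \<open>b1 \<in> {..<r}\<close> \<open>b2 \<in> {..<r}\<close> by (intro sum.mono_neutral_right) (auto simp: c_def)
  then have "(\<Sum>b<r. c b * Z b x) = d b2 * Z b1 x - d b1 * Z b2 x" for x
    using \<open>b1 \<noteq> b2\<close> by (simp add: c_def)
  moreover have "Z b1 x = d b1 * W (\<pi> b1) x" "Z b2 x = d b2 * W (\<pi> b1) x" if "x \<in> P" for x
    using multiple that \<open>b1 \<in> {..<r}\<close> \<open>b2 \<in> {..<r}\<close> \<open>\<pi> b1 = \<pi> b2\<close> by auto
  ultimately have "(\<Sum>b<r. c b * Z b x) = 0" if "x \<in> P" for x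
    using that by (simp add: mult.left_commute)
  then have "c b1 = 0"
    using lin_indep_overD[OF indep, of c b1] \<open>b1 \<in> {..<r}\<close> by blast
  then show False using multiple \<open>b1 \<noteq> b2\<close> \<open>b2 \<in> {..<r}\<close> by (simp add: c_def)
qed

lemma permutes_of_multiples:
  fixes r :: nat
  assumes "lin_indep_over P Z {..<r}"
    and multiple: "\<forall>b<r. \<pi> b < r \<and> d b \<noteq> 0 \<and> (\<forall>x\<in>P. Z b x = d b * W (\<pi> b) x)"
  obtains \<sigma> where "\<sigma> permutes {..<r}" "\<forall>a<r. \<forall>x\<in>P. Z (\<sigma> a) x = d (\<sigma> a) * W a x"
proof -
  define \<pi>' where "\<pi>' b = (if b < r then \<pi> b else b)" for b
  have "inj_on \<pi>' {..<r}" "\<pi>' ` {..<r} \<subseteq> {..<r}"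
    using inj_on_of_multiples[OF assms] multiple by (auto simp: \<pi>'_def inj_on_def)
  then have "bij_betw \<pi>' {..<r} {..<r}"
    using endo_inj_surj[of "{..<r}" \<pi>'] by (simp add: bij_betw_def)
  then have "\<pi>' permutes {..<r}"
    by (rule bij_imp_permutes) (simp add: \<pi>'_def)
  define \<sigma> where "\<sigma> = inv \<pi>'"
  have \<sigma>: "\<sigma> permutes {..<r}"
    unfolding \<sigma>_def by (rule permutes_inv[OF \<open>\<pi>' permutes {..<r}\<close>])
  have "Z (\<sigma> a) x = d (\<sigma> a) * W a x" if "a < r" "x \<in> P" for a x
  proof -
    have "\<sigma> a < r" using permutes_in_image[OF \<sigma>] that(1) by simp
    moreover have "\<pi>' (\<sigma> a) = a"
      unfolding \<sigma>_def by (rule permutes_inverses(1)[OF \<open>\<pi>' permutes {..<r}\<close>])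
    ultimately show ?thesis using multiple that(2) by (simp add: \<pi>'_def)
  qed
  then show thesis using that \<sigma> by blast
qed

section \<open>Dual families and Kruskal's lemma\<close>

definition dot :: "'p set \<Rightarrow> ('p \<Rightarrow> complex) \<Rightarrow> ('p \<Rightarrow> complex) \<Rightarrow> complex" where
  "dot P f g = (\<Sum>p\<in>P. f p * g p)"

lemma dot_sum_left: "dot P (\<lambda>p. \<Sum>j\<in>J. c j * f j p) g = (\<Sum>j\<in>J. c j * dot P (f j) g)"
  unfolding dot_def by (simp add: sum_distrib_left sum_distrib_right mult.assoc sum.swap[of _ P])

lemma dot_sum_right: "dot P f (\<lambda>p. \<Sum>j\<in>J. c j * g j p) = (\<Sum>j\<in>J. c j * dot P f (g j))"
  unfolding dot_def by (simp add: sum_distrib_left mult.left_commute sum.swap[of _ P])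

lemma dot_diff_left: "dot P (\<lambda>p. f p - g p) h = dot P f h - dot P g h"
  unfolding dot_def by (simp add: left_diff_distrib sum_subtractf)

lemma dot_diff_right: "dot P f (\<lambda>p. g p - h p) = dot P f g - dot P f h"
  unfolding dot_def by (simp add: right_diff_distrib sum_subtractf)

lemma dot_scale_right: "dot P f (\<lambda>p. a * g p) = a * dot P f g"
  unfolding dot_def by (simp add: sum_distrib_left mult.left_commute)

lemma dot_cnj: "dot P (\<lambda>p. cnj (f p)) (\<lambda>p. cnj (g p)) = cnj (dot P f g)"
  unfolding dot_def by simp

lemma exists_dot_eq_1:
  assumes "finite P" "p0 \<in> P" "g p0 \<noteq> 0"
  obtains t where "dot P g t = 1"
proof
  define N where "N = (\<Sum>p\<in>P. (cmod (g p))\<^sup>2)"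
  have "N > 0" unfolding N_def using assms by (intro sum_pos2[of P p0]) auto
  have "dot P g (\<lambda>p. cnj (g p)) = of_real N"
    unfolding dot_def N_def by (simp only: of_real_sum complex_norm_square)
  then show "dot P g (\<lambda>p. inverse (of_real N) * cnj (g p)) = 1"
    using \<open>N > 0\<close> by (simp add: dot_scale_right)
qed

lemma dual_vector_extend:
  assumes "finite P" "finite T" "lin_indep_over P f (insert b T)" "b \<notin> T"
    and dual: "\<forall>a\<in>T. \<forall>j\<in>T. dot P (f j) (h a) = (if a = j then 1 else 0)"
  obtains h0 where "dot P (f b) h0 = 1" "\<forall>j\<in>T. dot P (f j) h0 = 0"
proof -
  define g where "g = (\<lambda>p. f b p - (\<Sum>j\<in>T. dot P (f b) (h j) * f j p))"
  have dot_h: "dot P (\<lambda>p. \<Sum>j\<in>T. e j * f j p) (h a) = e a" if "a \<in> T" for e a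
    using dual that assms(2) by (simp add: dot_sum_left if_distrib[of "(*) _"] cong: if_cong)
  have g_orth: "dot P g (h a) = 0" if "a \<in> T" for a
    using that unfolding g_def dot_diff_left dot_h[OF that] by simp
  obtain p0 where p0: "p0 \<in> P" "g p0 \<noteq> 0"
  proof (rule ccontr)
    assume "\<not> thesis"
    then have "\<forall>p\<in>P. g p = 0" using that by blast
    define c where "c j = (if j = b then 1 else - dot P (f b) (h j))" for j
    have "(\<Sum>j\<in>T. c j * f j p) = - (\<Sum>j\<in>T. dot P (f b) (h j) * f j p)" for p
      using assms(4) by (auto simp: c_def sum_negf[symmetric] intro!: sum.cong)
    then have "(\<Sum>j\<in>insert b T. c j * f j p) = g p" for p
      using assms(2,4) by (simp add: c_def g_def)
    then have "c b = 0"
      using lin_indep_overD[OF assms(3), of c b] \<open>\<forall>p\<in>P. g p = 0\<close> by simp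
    then show False by (simp add: c_def)
  qed
  obtain t where t: "dot P g t = 1" using exists_dot_eq_1[of P p0 g, OF assms(1) p0] .
  define h0 where "h0 = (\<lambda>p. t p - (\<Sum>j\<in>T. dot P (f j) t * h j p))"
  have "dot P (f j) h0 = 0" if "j \<in> T" for j
  proof -
    have "(\<Sum>l\<in>T. dot P (f l) t * dot P (f j) (h l)) = (\<Sum>l\<in>T. if l = j then dot P (f l) t else 0)"
      using dual that by (intro sum.cong) auto
    then show ?thesis
      using that assms(2) by (simp add: h0_def dot_diff_right dot_sum_right)
  qed
  then have h0_T: "\<forall>j\<in>T. dot P (f j) h0 = 0" by blast
  have "dot P g h0 = 1"
    using t g_orth by (simp add: h0_def dot_diff_right dot_sum_right)
  moreover have "dot P (f b) h0 = dot P g h0 + (\<Sum>j\<in>T. dot P (f b) (h j) * dot P (f j) h0)"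
    unfolding g_def dot_diff_left dot_sum_left by simp
  ultimately have "dot P (f b) h0 = 1"
    using h0_T by simp
  with h0_T show thesis using that by blast
qed

lemma dual_family_exists:
  assumes "finite P" "finite T" "lin_indep_over P f T"
  shows "\<exists>h. \<forall>a\<in>T. \<forall>j\<in>T. dot P (f j) (h a) = (if a = j then 1 else 0)"
  using assms(2,3)
proof (induction T rule: finite_induct)
  case empty
  then show ?case by simp
next
  case (insert b T)
  then obtain h where dual: "\<forall>a\<in>T. \<forall>j\<in>T. dot P (f j) (h a) = (if a = j then 1 else 0)"
    using lin_indep_over_subset[OF insert.prems] by blast
  obtain h0 where h0: "dot P (f b) h0 = 1" "\<forall>j\<in>T. dot P (f j) h0 = 0"
    using dual_vector_extend[OF assms(1) insert.hyps(1) insert.prems insert.hyps(2) dual] .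
  define h' where "h' a = (if a = b then h0 else (\<lambda>p. h a p - dot P (f b) (h a) * h0 p))" for a
  have "dot P (f j) (h' a) = (if a = j then 1 else 0)" if "a \<in> insert b T" "j \<in> insert b T" for a j
    using that h0 dual insert.hyps(2) by (auto simp: h'_def dot_diff_right dot_scale_right)
  then show ?case by blast
qed

text \<open>Contracting the matrix with the dual family of \<open>b\<close> on \<open>U \<union> V\<close> yields \<open>card V\<close> independent
  vectors, all in the span of the \<open>x l\<close>.\<close>

lemma matrix_rank_bound:
  assumes "finite S" "\<forall>j\<in>S. c j \<noteq> 0" "U \<subseteq> S" "V \<subseteq> S - U" "finite Q"
    and indep_b: "lin_indep_over Q b (U \<union> V)" and indep_a: "lin_indep_over P a (S - U)"
    and "finite B" and decomp: "\<forall>p\<in>P. \<forall>q\<in>Q. (\<Sum>j\<in>S. c j * a j p * b j q) = (\<Sum>l\<in>B. x l p * y l q)"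
  shows "card V \<le> card B"
proof -
  have "finite (U \<union> V)" using assms(1,3,4) finite_subset by blast
  then obtain h where dual: "\<forall>l\<in>U \<union> V. \<forall>j\<in>U \<union> V. dot Q (b j) (h l) = (if l = j then 1 else 0)"
    using dual_family_exists[OF assms(5) _ indep_b] by blast
  define C where "C l p = dot Q (\<lambda>q. \<Sum>j\<in>S. c j * a j p * b j q) (h l)" for l p
  have C_span: "C l p = (\<Sum>l'\<in>B. dot Q (y l') (h l) * x l' p)" if "p \<in> P" for l p
  proof -
    have "C l p = dot Q (\<lambda>q. \<Sum>l'\<in>B. x l' p * y l' q) (h l)"
      unfolding C_def dot_def using decomp that by simp
    then show ?thesis by (simp add: dot_sum_left mult.commute)
  qed
  have C_expand: "C l p = (\<Sum>j\<in>S - U. (c j * dot Q (b j) (h l)) * a j p)" if "l \<in> V" for l p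
  proof -
    have "C l p = (\<Sum>j\<in>S. (c j * dot Q (b j) (h l)) * a j p)"
      unfolding C_def using dot_sum_left[where c = "\<lambda>j. c j * a j p" and f = b]
      by (simp add: mult_ac)
    also have "\<dots> = (\<Sum>j\<in>S - U. (c j * dot Q (b j) (h l)) * a j p)"
      using dual that assms(1,3,4) by (intro sum.mono_neutral_right) auto
    finally show ?thesis .
  qed
  have "lin_indep_over P C V"
    unfolding lin_indep_over_def
  proof (intro allI impI ballI)
    fix \<gamma> l0 assume zero: "\<forall>p\<in>P. (\<Sum>l\<in>V. \<gamma> l * C l p) = 0" and "l0 \<in> V"
    have "(\<Sum>l\<in>V. \<gamma> l * C l p) = (\<Sum>j\<in>S - U. (c j * (\<Sum>l\<in>V. \<gamma> l * dot Q (b j) (h l))) * a j p)" for p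
      by (simp add: C_expand sum_distrib_left sum_distrib_right mult_ac sum.swap[of _ V] cong: sum.cong)
    then have "c l0 * (\<Sum>l\<in>V. \<gamma> l * dot Q (b l0) (h l)) = 0"
      using lin_indep_overD[OF indep_a, of "\<lambda>j. c j * (\<Sum>l\<in>V. \<gamma> l * dot Q (b j) (h l))" l0]
        zero \<open>l0 \<in> V\<close> assms(4) by auto
    moreover have "(\<Sum>l\<in>V. \<gamma> l * dot Q (b l0) (h l)) = (\<Sum>l\<in>V. if l = l0 then \<gamma> l else 0)"
      using dual \<open>l0 \<in> V\<close> by (intro sum.cong) auto
    moreover have "finite V" using assms(1,4) finite_subset by blast
    ultimately show "\<gamma> l0 = 0" using assms(2,4) \<open>l0 \<in> V\<close> by auto
  qed
  then show ?thesis
    using lin_indep_over_card_le_span[OF _ \<open>finite B\<close>, where s = "\<lambda>l l'. dot Q (y l') (h l)" and Z = x] C_span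
    by blast
qed

definition kruskal_indep :: "'p set \<Rightarrow> (nat \<Rightarrow> 'p \<Rightarrow> complex) \<Rightarrow> nat \<Rightarrow> nat \<Rightarrow> bool" where
  "kruskal_indep P f r k \<longleftrightarrow> (\<forall>J. J \<subseteq> {..<r} \<longrightarrow> card J \<le> k \<longrightarrow> lin_indep_over P f J)"

lemma kruskal_indep_kruskal_rank: "kruskal_indep {..<d} S r (kruskal_rank d r S)"
  and kruskal_rank_le: "kruskal_rank d r S \<le> r"
proof -
  define K where "K k \<longleftrightarrow> k \<le> r \<and> (\<forall>J. J \<subseteq> {..<r} \<and> card J = k \<longrightarrow> lin_indep_on d S J)" for k
  have "K 0" unfolding K_def lin_indep_on_def by (auto dest: finite_subset)
  then have K_rank: "K (kruskal_rank d r S)"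
    unfolding kruskal_rank_def K_def[symmetric] by (rule GreatestI_nat[where b = r]) (simp add: K_def)
  then show "kruskal_rank d r S \<le> r" by (simp add: K_def)
  show "kruskal_indep {..<d} S r (kruskal_rank d r S)"
    unfolding kruskal_indep_def
  proof (intro allI impI)
    fix J assume J: "J \<subseteq> {..<r}" "card J \<le> kruskal_rank d r S"
    then have "finite J" "kruskal_rank d r S - card J \<le> card ({..<r} - J)"
      using K_rank by (auto simp: K_def card_Diff_subset finite_subset)
    then obtain T where T: "T \<subseteq> {..<r} - J" "card T = kruskal_rank d r S - card J" "finite T"
      by (meson obtain_subset_with_card_n)
    moreover have "J \<inter> T = {}" using T(1) by blast
    ultimately have "card (J \<union> T) = kruskal_rank d r S"
      using J(2) \<open>finite J\<close> by (simp add: card_Un_disjoint)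
    then have "lin_indep_over {..<d} S (J \<union> T)"
      using K_rank J T(1) unfolding K_def lin_indep_on_iff_lin_indep_over by blast
    then show "lin_indep_over {..<d} S J"
      using lin_indep_over_subset[of "{..<d}" S "J \<union> T" J] \<open>finite J\<close> \<open>finite T\<close> by blast
  qed
qed

lemma kruskal_rank_pos:
  assumes "0 < r" "\<forall>j<r. \<exists>x<d. S j x \<noteq> 0"
  shows "0 < kruskal_rank d r S"
proof -
  have "lin_indep_on d S {j}" if "j < r" for j
    using assms(2) that unfolding lin_indep_on_def by auto
  then have "1 \<le> kruskal_rank d r S"
    unfolding kruskal_rank_def using assms(1)
    by (intro Greatest_le_nat[where b = r]) (auto simp: card_1_singleton_iff)
  then show ?thesis by simp
qed

lemma kruskal_matrix_rank_bound:
  assumes "kruskal_indep P a r ka" "kruskal_indep Q b r kb" "finite Q"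
    and "S \<subseteq> {..<r}" "\<forall>j\<in>S. c j \<noteq> 0"
    and "V \<subseteq> S" "card V \<le> ka" "card V \<le> kb" "card S + card V \<le> ka + kb"
    and "finite B" "\<forall>p\<in>P. \<forall>q\<in>Q. (\<Sum>j\<in>S. c j * a j p * b j q) = (\<Sum>l\<in>B. x l p * y l q)"
  shows "card V \<le> card B"
proof -
  have "finite S" using assms(4) finite_subset by blast
  then have "card S - ka \<le> card (S - V)"
    using assms(6,7) by (simp add: card_Diff_subset finite_subset)
  then obtain U where U: "U \<subseteq> S - V" "card U = card S - ka" "finite U"
    by (rule obtain_subset_with_card_n)
  have "finite V" using assms(6) \<open>finite S\<close> finite_subset by blast
  have "U \<subseteq> S" "U \<inter> V = {}" using U(1) by auto
  then have "card (S - U) \<le> ka" "card (U \<union> V) \<le> kb"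
    using U(2,3) assms(8,9) \<open>finite V\<close> by (simp_all add: card_Diff_subset card_Un_disjoint)
  moreover have "S - U \<subseteq> {..<r}" "U \<union> V \<subseteq> {..<r}" using assms(4,6) U(1) by auto
  ultimately have "lin_indep_over P a (S - U)" "lin_indep_over Q b (U \<union> V)"
    using assms(1,2) unfolding kruskal_indep_def by blast+
  moreover have "V \<subseteq> S - U" using U(1) assms(6) by auto
  ultimately show ?thesis
    using matrix_rank_bound[OF \<open>finite S\<close> assms(5) \<open>U \<subseteq> S\<close> _ assms(3) _ _ assms(10,11)] by blast
qed

section \<open>Rank-one tensors and Khatri-Rao products\<close>

definition multi_indices :: "(nat \<Rightarrow> nat) \<Rightarrow> nat \<Rightarrow> nat list set" where
  "multi_indices n m = {is. valid_idx n m is}"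

definition outer_on :: "(nat \<Rightarrow> nat \<Rightarrow> complex) \<Rightarrow> nat set \<Rightarrow> nat list \<Rightarrow> complex" where
  "outer_on w I is = (\<Prod>i\<in>I. w i (is ! i))"

lemma finite_multi_indices: "finite (multi_indices n m)"
proof (rule finite_subset)
  show "multi_indices n m \<subseteq> {is. set is \<subseteq> {..<(\<Sum>i<m. n i)} \<and> length is = m}"
  proof (clarsimp simp: multi_indices_def valid_idx_def in_set_conv_nth)
    fix "is" k assume "\<forall>k<length is. is ! k < n k" "k < length is"
    moreover have "n k \<le> (\<Sum>i<length is. n i)" using \<open>k < length is\<close> by (intro member_le_sum) auto
    ultimately show "is ! k < (\<Sum>i<length is. n i)" by fastforce
  qed
qed (rule finite_lists_length_eq, simp)

lemma replicate_in_multi_indices: "\<forall>i<m. 0 < n i \<Longrightarrow> replicate m 0 \<in> multi_indices n m"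
  unfolding multi_indices_def valid_idx_def by auto

lemma outer_on_update:
  assumes "is \<in> multi_indices n m" "i < m" "x < n i" "i \<notin> I" "finite I"
  shows "is[i := x] \<in> multi_indices n m"
    and "outer_on w (insert i I) (is[i := x]) = w i x * outer_on w I is"
proof -
  show "is[i := x] \<in> multi_indices n m"
    using assms(1-3) unfolding multi_indices_def valid_idx_def by (auto simp: nth_list_update)
  have "outer_on w I (is[i := x]) = outer_on w I is"
    unfolding outer_on_def by (intro prod.cong) (metis assms(4) nth_list_update_neq)+
  moreover have "i < length is" using assms(1,2) by (simp add: multi_indices_def valid_idx_def)
  ultimately show "outer_on w (insert i I) (is[i := x]) = w i x * outer_on w I is"
    using assms(4,5) by (simp add: outer_on_def)
qed

lemma sum_outer_on_update:
  assumes "p \<in> multi_indices n m" "i < m" "q < n i" "i \<notin> I" "finite I"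
  shows "(\<Sum>j\<in>J. c j * outer_on (u j) (insert i I) (p[i := q])) = (\<Sum>j\<in>J. c j * outer_on (u j) I p * u j i q)"
  using outer_on_update(2)[OF assms] by (simp add: mult_ac)

lemma outer_on_span_matricize:
  assumes span: "\<forall>is\<in>multi_indices n m. outer_on v {..<m} is = (\<Sum>j<r. d j * outer_on (u j) {..<m} is)"
    and split: "i < m" "{..<m} = insert i I" "i \<notin> I" "finite I"
  shows "\<forall>p\<in>multi_indices n m. \<forall>q\<in>{..<n i}.
    (\<Sum>j<r. d j * outer_on (u j) I p * u j i q) = outer_on v I p * v i q"
proof (intro ballI)
  fix p q assume "p \<in> multi_indices n m" "q \<in> {..<n i}"
  note update = outer_on_update[OF this(1) split(1) _ split(3,4)]
  have "outer_on v (insert i I) (p[i := q]) = (\<Sum>j<r. d j * outer_on (u j) (insert i I) (p[i := q]))"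
    using span update(1) \<open>q \<in> {..<n i}\<close> unfolding split(2) by blast
  then show "(\<Sum>j<r. d j * outer_on (u j) I p * u j i q) = outer_on v I p * v i q"
    using update(2) \<open>q \<in> {..<n i}\<close> by (simp add: mult_ac)
qed

lemma outer_on_proportional_factors:
  assumes "\<forall>i<m. \<exists>x<n i. w i x \<noteq> 0" "d \<noteq> 0"
    and eq: "\<forall>is\<in>multi_indices n m. outer_on v {..<m} is = d * outer_on w {..<m} is"
  obtains c where "\<forall>i<m. \<forall>x<n i. v i x = c i * w i x" "(\<Prod>i<m. c i) = d"
proof -
  obtain e where e: "\<forall>i<m. e i < n i \<and> w i (e i) \<noteq> 0" using assms(1) by metis
  define base where "base = map e [0..<m]"
  have base: "base \<in> multi_indices n m" "\<forall>i<m. base ! i = e i"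
    using e by (auto simp: base_def multi_indices_def valid_idx_def)
  have w_base: "outer_on w I base \<noteq> 0" if "I \<subseteq> {..<m}" for I
    using e base(2) that by (auto simp: outer_on_def finite_subset)
  define c where "c i = v i (e i) / w i (e i)" for i
  have factor: "v i x = c i * w i x" if "i < m" "x < n i" for i x
  proof -
    define I where "I = {..<m} - {i}"
    have split: "{..<m} = insert i I" "i \<notin> I" "finite I" "I \<subseteq> {..<m}"
      using that(1) by (auto simp: I_def)
    have key: "v i y * outer_on v I base = d * outer_on w I base * w i y" if "y < n i" for y
    proof -
      note update = outer_on_update[OF base(1) \<open>i < m\<close> that split(2,3)]
      have "outer_on v (insert i I) (base[i := y]) = d * outer_on w (insert i I) (base[i := y])"
        using eq update(1) unfolding split(1) by blast
      then show ?thesis using update(2) by (simp add: mult_ac)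
    qed
    have "outer_on v I base \<noteq> 0"
      using key[of "e i"] e w_base[OF split(4)] \<open>i < m\<close> \<open>d \<noteq> 0\<close> by auto
    then have "v i y = d * outer_on w I base / outer_on v I base * w i y" if "y < n i" for y
      using key[OF that] by (simp add: field_simps)
    then show ?thesis
      using that e by (simp add: c_def)
  qed
  have "outer_on v {..<m} base = (\<Prod>i<m. c i) * outer_on w {..<m} base"
    using factor e base(2) by (simp add: outer_on_def prod.distrib)
  then have "(\<Prod>i<m. c i) = d"
    using eq base(1) w_base[of "{..<m}"] by simp
  with factor show thesis using that by blast
qed

text \<open>The bound of Sidiropoulos and Bro for the Kruskal rank of a Khatri-Rao product of two factors.\<close>

lemma kruskal_indep_outer_on_insert:
  assumes indep_I: "kruskal_indep (multi_indices n m) (\<lambda>j. outer_on (u j) I) r ka"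
    and indep_i: "kruskal_indep {..<n i} (\<lambda>j q. u j i q) r ki"
    and "1 \<le> ka" "1 \<le> ki" and mode: "i < m" "i \<notin> I" "finite I"
  shows "kruskal_indep (multi_indices n m) (\<lambda>j. outer_on (u j) (insert i I)) r (ka + ki - 1)"
  unfolding kruskal_indep_def lin_indep_over_def
proof (intro allI impI ballI, rule ccontr)
  let ?P = "multi_indices n m"
  fix J c j0 assume J: "J \<subseteq> {..<r}" "card J \<le> ka + ki - 1"
    and zero: "\<forall>p\<in>?P. (\<Sum>j\<in>J. c j * outer_on (u j) (insert i I) p) = 0"
    and "j0 \<in> J" "c j0 \<noteq> 0"
  define S where "S = {j\<in>J. c j \<noteq> 0}"
  have "finite J" using J(1) finite_subset by blast
  have "(\<Sum>j\<in>S. c j * outer_on (u j) I p * u j i q) = 0"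
    if "p \<in> ?P" "q \<in> {..<n i}" for p q
  proof -
    have "(\<Sum>j\<in>S. c j * outer_on (u j) I p * u j i q) = (\<Sum>j\<in>J. c j * outer_on (u j) I p * u j i q)"
      using \<open>finite J\<close> by (intro sum.mono_neutral_left) (auto simp: S_def)
    also have "\<dots> = (\<Sum>j\<in>J. c j * outer_on (u j) (insert i I) (p[i := q]))"
      using that(2) by (intro sum_outer_on_update[OF that(1) mode(1) _ mode(2,3), symmetric]) simp
    also have "\<dots> = 0"
      using zero outer_on_update(1)[OF that(1) mode(1) _ mode(2,3)] that(2) by simp
    finally show ?thesis .
  qed
  moreover have "card S \<le> card J" using \<open>finite J\<close> by (intro card_mono) (auto simp: S_def)
  moreover have "S \<subseteq> {..<r}" "\<forall>j\<in>S. c j \<noteq> 0" "{j0} \<subseteq> S"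
    using J(1) \<open>j0 \<in> J\<close> \<open>c j0 \<noteq> 0\<close> by (auto simp: S_def)
  ultimately have "card {j0} \<le> card ({} :: nat set)"
    using J(2) assms(3,4)
    by (intro kruskal_matrix_rank_bound[OF indep_I indep_i finite_lessThan,
          where S = S and c = c and x = "\<lambda>_ _. 0" and y = "\<lambda>_ _. 0"]) auto
  then show False by simp
qed

lemma kruskal_indep_outer_on:
  assumes "\<forall>i\<in>I. kruskal_indep {..<n i} (\<lambda>j. u j i) r (k i)" "\<forall>i\<in>I. 1 \<le> k i"
    and dims_pos: "\<forall>i<m. 0 < n i" and "finite I" "I \<subseteq> {..<m}"
  shows "kruskal_indep (multi_indices n m) (\<lambda>j. outer_on (u j) I) r (sum k I + 1 - card I)"
  using assms(4,1,2,5)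
proof (induction I rule: finite_induct)
  case empty
  have base: "replicate m 0 \<in> multi_indices n m" using replicate_in_multi_indices dims_pos by blast
  show ?case
    unfolding kruskal_indep_def
  proof (intro allI impI)
    fix J :: "nat set" assume "J \<subseteq> {..<r}" "card J \<le> sum k {} + 1 - card {}"
    then have "J = {} \<or> (\<exists>j. J = {j})"
      using finite_subset[of J "{..<r}"] by (auto simp: le_Suc_eq card_1_singleton_iff)
    then show "lin_indep_over (multi_indices n m) (\<lambda>j. outer_on (u j) {}) J"
      using base by (auto simp: lin_indep_over_def outer_on_def)
  qed
next
  case (insert i I)
  have "card I \<le> sum k I" using insert.prems(2) sum_mono[of I "\<lambda>_. 1" k] by simp
  have "kruskal_indep (multi_indices n m) (\<lambda>j. outer_on (u j) I) r (sum k I + 1 - card I)"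
    using insert.IH insert.prems by blast
  then have "kruskal_indep (multi_indices n m) (\<lambda>j. outer_on (u j) (insert i I)) r
      (sum k I + 1 - card I + k i - 1)"
    using insert \<open>card I \<le> sum k I\<close> by (intro kruskal_indep_outer_on_insert) auto
  moreover have "sum k I + 1 - card I + k i - 1 = sum k (insert i I) + 1 - card (insert i I)"
    using insert \<open>card I \<le> sum k I\<close> by simp
  ultimately show ?case by simp
qed

section \<open>Hermitian forms\<close>

definition herm_form :: "nat \<Rightarrow> (nat \<Rightarrow> real) \<Rightarrow> (nat \<Rightarrow> 'p \<Rightarrow> complex) \<Rightarrow> 'p \<Rightarrow> 'p \<Rightarrow> complex" where
  "herm_form r lam W x y = (\<Sum>j<r. of_real (lam j) * (W j x * cnj (W j y)))"

lemma herm_sum_eq_herm_form: "herm_sum m r lam u = herm_form r lam (\<lambda>j. outer_on (u j) {..<m})"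
  unfolding herm_sum_def herm_form_def herm_outer_def outer_on_def by (simp add: prod.distrib)

lemma tensor_eq_iff:
  "tensor_eq n m A B \<longleftrightarrow> (\<forall>x\<in>multi_indices n m. \<forall>y\<in>multi_indices n m. A x y = B x y)"
  unfolding tensor_eq_def multi_indices_def by auto

lemma dot_herm_form:
  "dot P (herm_form r lam W x) g = (\<Sum>j<r. (of_real (lam j) * W j x) * dot P (\<lambda>y. cnj (W j y)) g)"
  unfolding herm_form_def
  using dot_sum_left[where c = "\<lambda>j. of_real (lam j) * W j x" and f = "\<lambda>j y. cnj (W j y)"]
  by (simp add: mult.assoc)

text \<open>Contracting both forms with the conjugate of the dual family of \<open>W\<close> isolates \<open>lam a * W a\<close>.\<close>

lemma herm_form_span:
  assumes "finite P" "lin_indep_over P W {..<r}" "\<forall>a<r. lam a \<noteq> 0"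
    and eq: "\<forall>x\<in>P. \<forall>y\<in>P. herm_form r lam W x y = herm_form r' mu Z x y"
  obtains s where "\<forall>a<r. \<forall>x\<in>P. W a x = (\<Sum>b\<in>{b. b < r' \<and> mu b \<noteq> 0}. s a b * Z b x)"
proof -
  obtain h where dual: "\<forall>a<r. \<forall>j<r. dot P (W j) (h a) = (if a = j then 1 else 0)"
    using dual_family_exists[OF assms(1) _ assms(2)] by auto
  define t where "t a b = dot P (\<lambda>y. cnj (Z b y)) (\<lambda>y. cnj (h a y))" for a b
  define s where "s a b = of_real (mu b) * t a b / of_real (lam a)" for a b
  have "W a x = (\<Sum>b\<in>{b. b < r' \<and> mu b \<noteq> 0}. s a b * Z b x)" if "a < r" "x \<in> P" for a x
  proof -
    have "dot P (herm_form r lam W x) (\<lambda>y. cnj (h a y))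
        = (\<Sum>j<r. if j = a then of_real (lam j) * W j x else 0)"
      unfolding dot_herm_form dot_cnj using dual that(1) by (intro sum.cong) auto
    moreover have "dot P (herm_form r lam W x) (\<lambda>y. cnj (h a y))
        = dot P (herm_form r' mu Z x) (\<lambda>y. cnj (h a y))"
      using eq that(2) unfolding dot_def by simp
    ultimately have "of_real (lam a) * W a x = (\<Sum>b<r'. (of_real (mu b) * Z b x) * t a b)"
      using that(1) by (simp add: dot_herm_form t_def)
    then have "W a x = (\<Sum>b<r'. (of_real (mu b) * Z b x) * t a b) / of_real (lam a)"
      using assms(3) that(1) by (simp add: nonzero_eq_divide_eq mult.commute)
    also have "\<dots> = (\<Sum>b<r'. s a b * Z b x)"
      by (simp add: s_def sum_divide_distrib mult_ac)
    also have "\<dots> = (\<Sum>b\<in>{b. b < r' \<and> mu b \<noteq> 0}. s a b * Z b x)"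
      by (rule sum.mono_neutral_right) (auto simp: s_def)
    finally show ?thesis .
  qed
  then show thesis using that by blast
qed

lemma herm_form_length_ge:
  assumes "finite P" "lin_indep_over P W {..<r}" "\<forall>a<r. lam a \<noteq> 0"
    and "\<forall>x\<in>P. \<forall>y\<in>P. herm_form r lam W x y = herm_form r' mu Z x y"
  shows "r \<le> card {b. b < r' \<and> mu b \<noteq> 0}"
proof -
  obtain s where "\<forall>a<r. \<forall>x\<in>P. W a x = (\<Sum>b\<in>{b. b < r' \<and> mu b \<noteq> 0}. s a b * Z b x)"
    using herm_form_span[OF assms] by blast
  then have "card {..<r} \<le> card {b. b < r' \<and> mu b \<noteq> 0}"
    using lin_indep_over_card_le_span[OF assms(2), of "{b. b < r' \<and> mu b \<noteq> 0}" s Z] by auto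
  then show ?thesis by simp
qed

lemma herm_form_minimal:
  assumes "finite P" "lin_indep_over P W {..<r}" "\<forall>a<r. lam a \<noteq> 0"
    and "\<forall>x\<in>P. \<forall>y\<in>P. herm_form r lam W x y = herm_form r mu Z x y"
  shows "\<forall>b<r. mu b \<noteq> 0" "lin_indep_over P Z {..<r}"
proof -
  have "r \<le> card {b. b < r \<and> mu b \<noteq> 0}" by (rule herm_form_length_ge[OF assms])
  moreover have sub: "{b. b < r \<and> mu b \<noteq> 0} \<subseteq> {..<r}" by auto
  ultimately have nonzero: "{b. b < r \<and> mu b \<noteq> 0} = {..<r}"
    using card_subset_eq[OF finite_lessThan sub] card_mono[OF finite_lessThan sub] by simp
  then show "\<forall>b<r. mu b \<noteq> 0" by auto
  obtain s where "\<forall>a<r. \<forall>x\<in>P. W a x = (\<Sum>b\<in>{b. b < r \<and> mu b \<noteq> 0}. s a b * Z b x)"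
    using herm_form_span[OF assms] by blast
  then show "lin_indep_over P Z {..<r}"
    using lin_indep_over_if_spanning[OF assms(2), of "{..<r}" s Z] nonzero by auto
qed

lemma herm_form_coeffs_unique:
  assumes indep: "lin_indep_over P W {..<r}"
    and eq: "\<forall>x\<in>P. \<forall>y\<in>P. herm_form r lam W x y = herm_form r mu W x y"
  shows "\<forall>a<r. lam a = mu a"
proof (intro allI impI)
  fix a assume "a < r"
  then obtain y where "y \<in> P" "W a y \<noteq> 0"
    using lin_indep_over_nonzero[OF indep] by blast
  have "(\<Sum>j<r. ((of_real (lam j) - of_real (mu j)) * cnj (W j y)) * W j x) = 0" if "x \<in> P" for x
    using eq that \<open>y \<in> P\<close>
    by (simp add: herm_form_def algebra_simps sum_subtractf)
  then have "(of_real (lam a) - of_real (mu a)) * cnj (W a y) = 0"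
    using lin_indep_overD[OF indep, of "\<lambda>j. (of_real (lam j) - of_real (mu j)) * cnj (W j y)" a]
      \<open>a < r\<close> by simp
  then show "lam a = mu a" using \<open>W a y \<noteq> 0\<close> by simp
qed

lemma herm_form_permute:
  assumes "\<sigma> permutes {..<r}" "\<forall>a<r. Z (\<sigma> a) x = d a * W a x" "\<forall>a<r. Z (\<sigma> a) y = d a * W a y"
  shows "herm_form r mu Z x y = herm_form r (\<lambda>a. mu (\<sigma> a) * (cmod (d a))\<^sup>2) W x y"
proof -
  have "herm_form r mu Z x y = (\<Sum>a<r. of_real (mu (\<sigma> a)) * (Z (\<sigma> a) x * cnj (Z (\<sigma> a) y)))"
    unfolding herm_form_def using sum.permute[OF assms(1)] by simp
  also have "\<dots> = herm_form r (\<lambda>a. mu (\<sigma> a) * (cmod (d a))\<^sup>2) W x y"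
    unfolding herm_form_def using assms(2,3)
    by (intro sum.cong) (simp_all flip: complex_norm_square add: mult_ac)
  finally show ?thesis .
qed

section \<open>Hermitian rank and essential uniqueness\<close>

lemma hrank_herm_sum:
  assumes "lin_indep_over (multi_indices n m) (\<lambda>j. outer_on (u j) {..<m}) {..<r}" "\<forall>j<r. lam j \<noteq> 0"
  shows "hrank n m (herm_sum m r lam u) = r"
  unfolding hrank_def
proof (rule Least_equality)
  show "\<exists>lam' u'. tensor_eq n m (herm_sum m r lam u) (herm_sum m r lam' u')"
    unfolding tensor_eq_def by blast
next
  fix r' assume "\<exists>mu v. tensor_eq n m (herm_sum m r lam u) (herm_sum m r' mu v)"
  then obtain mu v where "tensor_eq n m (herm_sum m r lam u) (herm_sum m r' mu v)" by blast
  then have "r \<le> card {b. b < r' \<and> mu b \<noteq> 0}"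
    unfolding tensor_eq_iff herm_sum_eq_herm_form
    by (intro herm_form_length_ge[OF finite_multi_indices assms])
  also have "\<dots> \<le> r'" using card_mono[of "{..<r'}" "{b. b < r' \<and> mu b \<noteq> 0}"] by auto
  finally show "r \<le> r'" .
qed

locale kruskal_condition =
  fixes n :: "nat \<Rightarrow> nat" and m r :: nat and u :: "nat \<Rightarrow> nat \<Rightarrow> nat \<Rightarrow> complex" and k :: "nat \<Rightarrow> nat"
  assumes kruskal: "\<forall>i<m. kruskal_indep {..<n i} (\<lambda>j. u j i) r (k i)"
    and k_pos: "\<forall>i<m. 1 \<le> k i" and k_le: "\<forall>i<m. k i \<le> r"
    and dims_pos: "\<forall>i<m. 0 < n i"
    and k_sum: "r + m \<le> (\<Sum>i<m. k i)"
begin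

lemma outer_lin_indep: "lin_indep_over (multi_indices n m) (\<lambda>j. outer_on (u j) {..<m}) {..<r}"
proof -
  have "kruskal_indep (multi_indices n m) (\<lambda>j. outer_on (u j) {..<m}) r (sum k {..<m} + 1 - m)"
    using kruskal_indep_outer_on[of "{..<m}" n u r k m] kruskal k_pos dims_pos by simp
  then show ?thesis using k_sum unfolding kruskal_indep_def by simp
qed

text \<open>Splitting off a mode \<open>i0\<close> with \<open>2 \<le> k i0\<close> turns a rank-one tensor into a matrix of rank
  one, which Kruskal's lemma rules out as soon as two coefficients are nonzero.\<close>

lemma outer_in_span_support_le_1:
  assumes span: "\<forall>is\<in>multi_indices n m. outer_on v {..<m} is = (\<Sum>j<r. d j * outer_on (u j) {..<m} is)"
  shows "card {j. j < r \<and> d j \<noteq> 0} \<le> 1"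
proof (rule ccontr)
  define S where "S = {j. j < r \<and> d j \<noteq> 0}"
  assume "\<not> card {j. j < r \<and> d j \<noteq> 0} \<le> 1"
  then obtain j1 j2 where j12: "j1 \<in> S" "j2 \<in> S" "j1 \<noteq> j2"
    unfolding S_def by (auto simp: card_le_Suc0_iff_eq)
  obtain i0 where "i0 < m" "2 \<le> k i0"
  proof (rule ccontr)
    assume "\<not> thesis"
    then have "(\<Sum>i<m. k i) \<le> (\<Sum>i<m. 1)" using that by (intro sum_mono) force
    then show False using k_sum j12(1) by (simp add: S_def)
  qed
  define I where "I = {..<m} - {i0}"
  have split: "{..<m} = insert i0 I" "i0 \<notin> I" "finite I" "card I = m - 1"
    using \<open>i0 < m\<close> by (auto simp: I_def)
  have "card I \<le> sum k I" using k_pos sum_mono[of I "\<lambda>_. 1" k] by (simp add: I_def)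
  define ka where "ka = sum k I + 1 - card I"
  have "I \<subseteq> {..<m}" by (auto simp: I_def)
  then have indep_I: "kruskal_indep (multi_indices n m) (\<lambda>j. outer_on (u j) I) r ka"
    unfolding ka_def using kruskal k_pos by (intro kruskal_indep_outer_on[OF _ _ dims_pos split(3)]) auto
  have "(\<Sum>j\<in>S. d j * outer_on (u j) I p * u j i0 q) = (\<Sum>j<r. d j * outer_on (u j) I p * u j i0 q)" for p q
    by (intro sum.mono_neutral_left) (auto simp: S_def)
  then have matrix: "\<forall>p\<in>multi_indices n m. \<forall>q\<in>{..<n i0}.
      (\<Sum>j\<in>S. d j * outer_on (u j) I p * u j i0 q) = (\<Sum>l\<in>{0::nat}. outer_on v I p * v i0 q)"
    using outer_on_span_matricize[OF span \<open>i0 < m\<close> split(1-3)] by simp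
  have indep_i0: "kruskal_indep {..<n i0} (\<lambda>j q. u j i0 q) r (k i0)" using kruskal \<open>i0 < m\<close> by simp
  have S: "S \<subseteq> {..<r}" "\<forall>j\<in>S. d j \<noteq> 0" "{j1, j2} \<subseteq> S" using j12 by (auto simp: S_def)
  have "card S \<le> r" using card_mono[OF finite_lessThan S(1)] by simp
  moreover have "card {j1, j2} = 2" "k i0 + sum k I = (\<Sum>i<m. k i)" "k i0 \<le> r"
    using j12(3) split k_le \<open>i0 < m\<close> by simp_all
  ultimately have "card {j1, j2} \<le> ka" "card {j1, j2} \<le> k i0" "card S + card {j1, j2} \<le> ka + k i0"
    using k_sum split(4) \<open>card I \<le> sum k I\<close> \<open>2 \<le> k i0\<close> \<open>i0 < m\<close> unfolding ka_def by linarith+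
  then have "card {j1, j2} \<le> card {0::nat}"
    by (rule kruskal_matrix_rank_bound[OF indep_I indep_i0 finite_lessThan S _ _ _ _ matrix]) simp
  then show False using j12(3) by simp
qed

lemma outer_in_span_single_term:
  assumes span: "\<forall>is\<in>multi_indices n m. outer_on v {..<m} is = (\<Sum>j<r. d j * outer_on (u j) {..<m} is)"
    and nonzero: "\<exists>is\<in>multi_indices n m. outer_on v {..<m} is \<noteq> 0"
  obtains j0 where "j0 < r" "d j0 \<noteq> 0"
    "\<forall>is\<in>multi_indices n m. outer_on v {..<m} is = d j0 * outer_on (u j0) {..<m} is"
proof -
  define S where "S = {j. j < r \<and> d j \<noteq> 0}"
  have sum_S: "(\<Sum>j<r. d j * outer_on (u j) {..<m} is) = (\<Sum>j\<in>S. d j * outer_on (u j) {..<m} is)" for "is"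
    by (intro sum.mono_neutral_right) (auto simp: S_def)
  have "S \<noteq> {}" using span nonzero sum_S by auto
  moreover have "card S \<le> 1" using outer_in_span_support_le_1[OF span] by (simp add: S_def)
  moreover have "finite S" by (simp add: S_def)
  ultimately have "card S = 1" by (simp add: card_gt_0_iff le_antisym Suc_leI)
  then obtain j0 where "S = {j0}" by (rule card_1_singletonE)
  then have "j0 < r" "d j0 \<noteq> 0"
    "\<forall>is\<in>multi_indices n m. outer_on v {..<m} is = d j0 * outer_on (u j0) {..<m} is"
    using span sum_S by (auto simp: S_def)
  then show thesis using that by blast
qed

lemma herm_decomp_permuted_multiples:
  assumes lam: "\<forall>j<r. lam j \<noteq> 0"
    and eq: "\<forall>x\<in>multi_indices n m. \<forall>y\<in>multi_indices n m.
      herm_form r lam (\<lambda>j. outer_on (u j) {..<m}) x y = herm_form r mu (\<lambda>j. outer_on (v j) {..<m}) x y"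
  obtains \<sigma> d where "\<sigma> permutes {..<r}" "\<forall>a<r. d a \<noteq> 0"
    "\<forall>a<r. \<forall>x\<in>multi_indices n m. outer_on (v (\<sigma> a)) {..<m} x = d a * outer_on (u a) {..<m} x"
    "\<forall>a<r. lam a = mu (\<sigma> a) * (cmod (d a))\<^sup>2"
proof -
  let ?P = "multi_indices n m"
  let ?W = "\<lambda>j. outer_on (u j) {..<m}" and ?Z = "\<lambda>j. outer_on (v j) {..<m}"
  have mu: "\<forall>b<r. mu b \<noteq> 0" and Z_indep: "lin_indep_over ?P ?Z {..<r}"
    using herm_form_minimal[OF finite_multi_indices outer_lin_indep lam eq] by auto
  have "\<forall>x\<in>?P. \<forall>y\<in>?P. herm_form r mu ?Z x y = herm_form r lam ?W x y" using eq by simp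
  then obtain s where s: "\<forall>b<r. \<forall>x\<in>?P. ?Z b x = (\<Sum>a\<in>{a. a < r \<and> lam a \<noteq> 0}. s b a * ?W a x)"
    by (rule herm_form_span[OF finite_multi_indices Z_indep mu])
  have "\<exists>a e. a < r \<and> e \<noteq> 0 \<and> (\<forall>x\<in>?P. ?Z b x = e * ?W a x)" if "b < r" for b
  proof -
    have "{a. a < r \<and> lam a \<noteq> 0} = {..<r}" using lam by auto
    then have "\<forall>x\<in>?P. ?Z b x = (\<Sum>a<r. s b a * ?W a x)" using s that by simp
    moreover have "\<exists>x\<in>?P. ?Z b x \<noteq> 0"
      using lin_indep_over_nonzero[OF Z_indep] that by blast
    ultimately obtain a where "a < r" "s b a \<noteq> 0" "\<forall>x\<in>?P. ?Z b x = s b a * ?W a x"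
      by (rule outer_in_span_single_term)
    then show ?thesis by blast
  qed
  then obtain \<pi> e where multiple: "\<forall>b<r. \<pi> b < r \<and> e b \<noteq> 0 \<and> (\<forall>x\<in>?P. ?Z b x = e b * ?W (\<pi> b) x)"
    by metis
  obtain \<sigma> where \<sigma>: "\<sigma> permutes {..<r}" "\<forall>a<r. \<forall>x\<in>?P. ?Z (\<sigma> a) x = e (\<sigma> a) * ?W a x"
    using permutes_of_multiples[OF Z_indep multiple] .
  have "herm_form r mu ?Z x y = herm_form r (\<lambda>a. mu (\<sigma> a) * (cmod (e (\<sigma> a)))\<^sup>2) ?W x y"
    if "x \<in> ?P" "y \<in> ?P" for x y
    using herm_form_permute[OF \<sigma>(1), where Z = ?Z and W = ?W and d = "\<lambda>a. e (\<sigma> a)"] \<sigma>(2) that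
    by simp
  then have "\<forall>x\<in>?P. \<forall>y\<in>?P. herm_form r lam ?W x y = herm_form r (\<lambda>a. mu (\<sigma> a) * (cmod (e (\<sigma> a)))\<^sup>2) ?W x y"
    using eq by simp
  then have coeff: "\<forall>a<r. lam a = mu (\<sigma> a) * (cmod (e (\<sigma> a)))\<^sup>2"
    by (rule herm_form_coeffs_unique[OF outer_lin_indep])
  have "\<forall>a<r. e (\<sigma> a) \<noteq> 0"
    using multiple permutes_in_image[OF \<sigma>(1)] by simp
  from that[of \<sigma> "\<lambda>a. e (\<sigma> a)", OF \<sigma>(1) this \<sigma>(2) coeff] show thesis .
qed

lemma herm_decomp_essentially_unique:
  assumes lam: "\<forall>j<r. lam j \<noteq> 0" and u_nonzero: "\<forall>j<r. \<forall>i<m. \<exists>x<n i. u j i x \<noteq> 0"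
    and eq: "\<forall>x\<in>multi_indices n m. \<forall>y\<in>multi_indices n m.
      herm_form r lam (\<lambda>j. outer_on (u j) {..<m}) x y = herm_form r mu (\<lambda>j. outer_on (v j) {..<m}) x y"
  shows "\<exists>\<sigma>. \<sigma> permutes {..<r} \<and>
    (\<forall>j<r. \<exists>c. (\<forall>i<m. \<forall>x<n i. v (\<sigma> j) i x = c i * u j i x) \<and> mu (\<sigma> j) * (\<Prod>i<m. (cmod (c i))\<^sup>2) = lam j)"
proof -
  obtain \<sigma> d where \<sigma>: "\<sigma> permutes {..<r}" "\<forall>a<r. d a \<noteq> 0"
    "\<forall>a<r. \<forall>x\<in>multi_indices n m. outer_on (v (\<sigma> a)) {..<m} x = d a * outer_on (u a) {..<m} x"
    "\<forall>a<r. lam a = mu (\<sigma> a) * (cmod (d a))\<^sup>2"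
    by (rule herm_decomp_permuted_multiples[OF lam eq])
  have "\<exists>c. (\<forall>i<m. \<forall>x<n i. v (\<sigma> j) i x = c i * u j i x) \<and> mu (\<sigma> j) * (\<Prod>i<m. (cmod (c i))\<^sup>2) = lam j"
    if "j < r" for j
  proof -
    have "\<forall>i<m. \<exists>x<n i. u j i x \<noteq> 0" "d j \<noteq> 0"
      "\<forall>is\<in>multi_indices n m. outer_on (v (\<sigma> j)) {..<m} is = d j * outer_on (u j) {..<m} is"
      using u_nonzero \<sigma>(2,3) that by blast+
    then obtain c where c: "\<forall>i<m. \<forall>x<n i. v (\<sigma> j) i x = c i * u j i x" "(\<Prod>i<m. c i) = d j"
      by (rule outer_on_proportional_factors)
    then have "(\<Prod>i<m. (cmod (c i))\<^sup>2) = (cmod (d j))\<^sup>2"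
      by (simp add: prod_power_distrib[symmetric] prod_norm)
    then show ?thesis using c(1) \<sigma>(4) that by auto
  qed
  then show ?thesis using \<sigma>(1) by blast
qed

end

theorem proposition2p5:
  fixes n :: "nat \<Rightarrow> nat" and m r :: nat and \<sigma> :: "nat \<Rightarrow> nat"
    and lam :: "nat \<Rightarrow> real" and u :: "nat \<Rightarrow> nat \<Rightarrow> nat \<Rightarrow> complex"
    and H :: "nat list \<Rightarrow> nat list \<Rightarrow> complex"
  assumes "m > 1"
    and "H = herm_sum m r lam u"
    and "\<forall>j<r. lam j \<noteq> 0"
    and "\<forall>j<r. \<forall>i<m. \<exists>x<n i. u j i x \<noteq> 0"
    and "(\<Sum>i<m. kruskal_rank (n i) r (\<lambda>j. u j i)) \<ge> r + m"
  shows "hrank n m H = r \<and>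
    (\<forall>mu v. tensor_eq n m H (herm_sum m r mu v) \<longrightarrow>
       (\<exists>\<sigma>. \<sigma> permutes {..<r} \<and>
          (\<forall>j<r. \<exists>c :: nat \<Rightarrow> complex.
              (\<forall>i<m. \<forall>x<n i. v (\<sigma> j) i x = c i * u j i x) \<and>
              mu (\<sigma> j) * (\<Prod>i<m. (cmod (c i))\<^sup>2) = lam j)))"
proof -
  define k where "k i = kruskal_rank (n i) r (\<lambda>j. u j i)" for i
  have "0 < r"
  proof (rule ccontr)
    assume "\<not> 0 < r"
    then have "k i = 0" for i using kruskal_rank_le[of "n i" r] by (simp add: k_def)
    then show False using assms(1,5) unfolding k_def[symmetric] by simp
  qed
  interpret kruskal_condition n m r u k
  proof
    show "\<forall>i<m. 0 < n i" using assms(4) \<open>0 < r\<close> by fastforce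
  qed (use kruskal_indep_kruskal_rank kruskal_rank_le kruskal_rank_pos[OF \<open>0 < r\<close>] assms(4,5)
       in \<open>auto simp: k_def Suc_le_eq\<close>)
  have "hrank n m H = r"
    using hrank_herm_sum[OF outer_lin_indep assms(3)] assms(2) by simp
  moreover have "\<exists>\<sigma>. \<sigma> permutes {..<r} \<and> (\<forall>j<r. \<exists>c :: nat \<Rightarrow> complex.
      (\<forall>i<m. \<forall>x<n i. v (\<sigma> j) i x = c i * u j i x) \<and> mu (\<sigma> j) * (\<Prod>i<m. (cmod (c i))\<^sup>2) = lam j)"
    if "tensor_eq n m H (herm_sum m r mu v)" for mu v
    using herm_decomp_essentially_unique[OF assms(3,4)] that
    unfolding assms(2) tensor_eq_iff herm_sum_eq_herm_form by blast
  ultimately show ?thesis by blast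
qed

end
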